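(* Let $G$ be a finite graph with maximum degree $\Delta$, with edges ordered $e_1,\ldots,e_m$, let $\gamma>1$ be real, $K=\lceil(2+\gamma)(\Delta-1)\rceil$, and run the Procedure described in the context. Then for each step $i$, the map which assigns to each input prefix $(F_j)_{j\le i}$ (for which steps $1,\ldots,i$ are performed) the output $((R_j)_{j\le i},\Phi_i)$ is injective.
   Context: Procedure. A partial edge-coloring assigns to some edges a color in $\{1,\ldots,K\}$; initially all edges are uncolored. The input is a vector $F$ with entries in $\{1,\ldots,\lceil\gamma(\Delta-1)\rceil\}$. Fix, for every edge $e$ and every $k\ge 3$, an enumeration (e.g. lexicographic) of the cycles of length $2k$ of $G$ containing $e$. At step $i=1,2,\ldots$: if no edge is uncolored, stop. Otherwise let $e_j=uv$ be the uncolored edge of smallest index. Let $S'$ be the set of colors appearing on edges $xy\neq uv$ such that (1) $x=u$ or $x=v$, or (2) edges $ux$ and $vy$ exist and have the same color; let $S=\{1,\ldots,K\}\setminus S'$. Color $e_j$ with the $F_i$-th smallest element of $S$. If this creates a cycle colored with only two colors (it has length $2k\ge 6$), choose one such cycle $C$ by a fixed deterministic rule, write it as $e_{i_1},e_{i_2},\ldots,e_{i_{2k}},e_{i_1}$ (consecutive edges) with $e_{i_1}=e_j$ and $i_2<i_{2k}$, uncolor all edges of $C$ except $e_{i_2}$ and $e_{i_3}$, and set $R_i=(k,\ell)$ where $\ell$ is the index of $C$ in the fixed enumeration of cycles of length $2k$ containing $e_j$. Otherwise $R_i$ is empty. $\Phi_i$ denotes the partial coloring after step $i$. *)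

theory Defs
  imports Complex_Main
begin

(* A finite simple graph is given by the list es = [e_1,...,e_m] of its edges
   (each edge a 2-element vertex set); list position t corresponds to e_(t+1).
   A partial edge-colouring is a map edges => nat option (None = uncoloured). *)

type_synonym 'a colouring = "'a set \<Rightarrow> nat option"

definition degree :: "'a set list \<Rightarrow> 'a \<Rightarrow> nat" where
  "degree es v = card {e \<in> set es. v \<in> e}"

definition maxdeg :: "'a set list \<Rightarrow> nat" where
  "maxdeg es = Max (insert 0 (degree es ` (\<Union> (set es))))"

definition is_cycle_len :: "'a set list \<Rightarrow> nat \<Rightarrow> 'a set set \<Rightarrow> bool" where
  "is_cycle_len es n C \<longleftrightarrow> n \<ge> 3 \<and> C \<subseteq> set es \<and>
     (\<exists>vs. length vs = n \<and> distinct vs \<and>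
        C = {{vs ! t, vs ! ((t + 1) mod n)} | t. t < n})"

definition cycles_through :: "'a set list \<Rightarrow> nat \<Rightarrow> 'a set \<Rightarrow> 'a set set set" where
  "cycles_through es k e = {C. is_cycle_len es (2 * k) C \<and> e \<in> C}"

definition bichrom :: "'a colouring \<Rightarrow> 'a set set \<Rightarrow> bool" where
  "bichrom \<Phi> C \<longleftrightarrow> (\<forall>f\<in>C. \<Phi> f \<noteq> None) \<and> card (\<Phi> ` C) \<le> 2"

definition forbidden :: "'a set list \<Rightarrow> 'a colouring \<Rightarrow> 'a set \<Rightarrow> nat set" where
  "forbidden es \<Phi> e = {c. \<exists>f\<in>set es. f \<noteq> e \<and> \<Phi> f = Some c \<and>
      (f \<inter> e \<noteq> {} \<or>
       (\<exists>u v x y. e = {u, v} \<and> f = {x, y} \<and> {u, x} \<in> set es \<and> {v, y} \<in> set es \<and>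
                  \<Phi> {u, x} \<noteq> None \<and> \<Phi> {u, x} = \<Phi> {v, y}))}"

definition avail :: "nat \<Rightarrow> 'a set list \<Rightarrow> 'a colouring \<Rightarrow> 'a set \<Rightarrow> nat set" where
  "avail K es \<Phi> e = {1..K} - forbidden es \<Phi> e"

definition nbrs :: "'a set set \<Rightarrow> 'a set \<Rightarrow> 'a set set" where
  "nbrs C f = {g \<in> C. g \<noteq> f \<and> g \<inter> f \<noteq> {}}"

(* One step of the Procedure (assuming some edge is uncoloured).
   idx e k C : index of C in the fixed enumeration of cycles of length 2k containing e.
   rule \<Phi>' B : the fixed deterministic rule picking one of the bichromatic cycles B. *)
definition proc_step ::
  "'a set list \<Rightarrow> nat \<Rightarrow> ('a set \<Rightarrow> nat \<Rightarrow> 'a set set \<Rightarrow> nat)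
   \<Rightarrow> ('a colouring \<Rightarrow> 'a set set set \<Rightarrow> 'a set set)
   \<Rightarrow> 'a colouring \<Rightarrow> nat \<Rightarrow> (nat \<times> nat) option \<times> 'a colouring" where
  "proc_step es K idx rule \<Phi> F =
    (let j = Min {t. t < length es \<and> \<Phi> (es ! t) = None};
         e = es ! j;
         c = sorted_list_of_set (avail K es \<Phi> e) ! (F - 1);
         \<Phi>' = \<Phi>(e := Some c);
         B = {C. (\<exists>n. is_cycle_len es n C) \<and> e \<in> C \<and> bichrom \<Phi>' C}
     in if B = {} then (None, \<Phi>')
        else (let C = rule \<Phi>' B;
                  k = card C div 2;
                  e2 = es ! Min {t. t < length es \<and> es ! t \<in> nbrs C e};
                  e3 = (THE g. g \<in> nbrs C e2 \<and> g \<noteq> e)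
              in (Some (k, idx e k C), (\<lambda>f. if f \<in> C - {e2, e3} then None else \<Phi>' f))))"

(* Run the procedure on the input prefix Fs from colouring \<Phi>; returns None if the
   procedure stops (all edges coloured) before all steps of Fs are performed,
   otherwise Some (list of R_j, final colouring). *)
fun proc_run ::
  "'a set list \<Rightarrow> nat \<Rightarrow> ('a set \<Rightarrow> nat \<Rightarrow> 'a set set \<Rightarrow> nat)
   \<Rightarrow> ('a colouring \<Rightarrow> 'a set set set \<Rightarrow> 'a set set)
   \<Rightarrow> 'a colouring \<Rightarrow> nat list \<Rightarrow> ((nat \<times> nat) option list \<times> 'a colouring) option" where
  "proc_run es K idx rule \<Phi> [] = Some ([], \<Phi>)"
| "proc_run es K idx rule \<Phi> (F # Fs) =
    (if (\<forall>t < length es. \<Phi> (es ! t) \<noteq> None) then None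
     else (case proc_step es K idx rule \<Phi> F of
             (r, \<Phi>') \<Rightarrow> map_option (\<lambda>(rs, \<Psi>). (r # rs, \<Psi>)) (proc_run es K idx rule \<Phi>' Fs)))"

end

theory Submission
  imports Defs
begin

text \<open>At every step the Procedure colours the first uncoloured edge \<open>e = uv\<close> with the
  \<open>F\<^sub>i\<close>-th available colour. At most \<open>2(\<Delta> - 1)\<close> colours are forbidden at \<open>e\<close>: those seen at
  \<open>u\<close> or \<open>v\<close>, and those of edges \<open>xy\<close> with \<open>ux\<close>, \<open>vy\<close> equally coloured. Hence at least
  \<open>\<lceil>\<gamma>(\<Delta> - 1)\<rceil>\<close> colours are available, and \<open>F\<^sub>i\<close> can be read off the colour of \<open>e\<close>.
  All colourings stay proper, so a bichromatic cycle created at \<open>e\<close> alternates, is even and is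
  not a 4-cycle (its colour would be forbidden); the record \<open>R\<^sub>i\<close> identifies the cycle, and its
  two kept adjacent edges fix the colours of the erased ones. Thus two runs with the same output
  colour the same edges at every step, and each step is undone from its record and the colouring
  that follows it.\<close>

section \<open>Properly coloured bichromatic cycles\<close>

definition proper_colouring :: "'a set list \<Rightarrow> 'a colouring \<Rightarrow> bool" where
  "proper_colouring es \<Phi> \<longleftrightarrow>
     (\<forall>f\<in>set es. \<forall>g\<in>set es. f \<noteq> g \<longrightarrow> f \<inter> g \<noteq> {} \<longrightarrow> \<Phi> f \<noteq> None \<longrightarrow> \<Phi> f \<noteq> \<Phi> g)"

lemma proper_colouringD:
  "\<lbrakk>proper_colouring es \<Phi>; f \<in> set es; g \<in> set es; f \<noteq> g; f \<inter> g \<noteq> {}; \<Phi> f \<noteq> None\<rbrakk>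
   \<Longrightarrow> \<Phi> f \<noteq> \<Phi> g"
  unfolding proper_colouring_def by blast

lemma proper_colouring_unique_at:
  assumes "proper_colouring es \<Phi>" "f \<in> set es" "g \<in> set es" "w \<in> f" "w \<in> g"
    and "\<Phi> f = Some a" "\<Phi> g = Some a"
  shows "f = g"
proof (rule ccontr)
  assume "f \<noteq> g"
  moreover have "f \<inter> g \<noteq> {}" using assms(4,5) by blast
  ultimately show False using proper_colouringD[OF assms(1-3)] assms(6,7) by simp
qed

locale cycle_list =
  fixes vs :: "'a list" and n :: nat
  assumes three_le: "3 \<le> n" and length_vs: "length vs = n" and distinct_vs: "distinct vs"
begin

definition edge :: "nat \<Rightarrow> 'a set" where
  "edge t = {vs ! t, vs ! ((t + 1) mod n)}"

definition edges :: "'a set set" where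
  "edges = edge ` {..<n}"

definition prev :: "nat \<Rightarrow> nat" where
  "prev s = (if s = 0 then n - 1 else s - 1)"

lemma Suc_mod_eq: "t < n \<Longrightarrow> Suc t mod n = (if Suc t = n then 0 else Suc t)"
  by auto

lemma nth_vs_eq_iff: "s < n \<Longrightarrow> t < n \<Longrightarrow> vs ! s = vs ! t \<longleftrightarrow> s = t"
  using distinct_vs length_vs by (simp add: nth_eq_iff_index_eq)

lemma succ_less: "(t + 1) mod n < n"
  using three_le by simp

lemma succ_neq: "t < n \<Longrightarrow> (t + 1) mod n \<noteq> t"
  using three_le by (simp add: Suc_mod_eq)

lemma prev_less: "s < n \<Longrightarrow> prev s < n"
  using three_le by (auto simp: prev_def)

lemma succ_eq_iff_prev: "s < n \<Longrightarrow> p < n \<Longrightarrow> s = (p + 1) mod n \<longleftrightarrow> p = prev s"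
  using three_le by (auto simp: prev_def Suc_mod_eq split: if_splits)

lemma prev_neq: "s < n \<Longrightarrow> prev s \<noteq> s" "s < n \<Longrightarrow> prev s \<noteq> (s + 1) mod n"
  using three_le by (auto simp: prev_def Suc_mod_eq)

lemma edge_inj: assumes "s < n" "t < n" "edge s = edge t" shows "s = t"
proof (rule ccontr)
  assume "s \<noteq> t"
  have "vs ! s \<in> edge t" "vs ! ((s + 1) mod n) \<in> edge t"
    using assms(3) by (auto simp: edge_def)
  then have "(s = t \<or> s = (t + 1) mod n) \<and> ((s + 1) mod n = t \<or> (s + 1) mod n = (t + 1) mod n)"
    unfolding edge_def using nth_vs_eq_iff assms succ_less by auto
  with \<open>s \<noteq> t\<close> assms show False
    using three_le by (auto simp: Suc_mod_eq split: if_splits)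
qed

lemma edge_succ_meets: "edge t \<inter> edge ((t + 1) mod n) \<noteq> {}"
  by (auto simp: edge_def)

lemma edge_succ_neq: "t < n \<Longrightarrow> edge t \<noteq> edge ((t + 1) mod n)"
  using edge_inj succ_less succ_neq by metis

lemma edges_meet_imp_adjacent:
  assumes "s < n" "t < n" "s \<noteq> t" "edge s \<inter> edge t \<noteq> {}"
  shows "t = (s + 1) mod n \<or> s = (t + 1) mod n"
proof -
  from assms(4) obtain x where "x \<in> edge s" "x \<in> edge t" by blast
  then have "s = t \<or> s = (t + 1) mod n \<or> (s + 1) mod n = t \<or> (s + 1) mod n = (t + 1) mod n"
    unfolding edge_def using nth_vs_eq_iff assms(1,2) succ_less by auto
  with assms(1-3) show ?thesis
    using three_le by (auto simp: Suc_mod_eq split: if_splits)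
qed

lemma edge_in_edges: "t < n \<Longrightarrow> edge t \<in> edges"
  unfolding edges_def by simp

lemma edgesE: assumes "g \<in> edges" obtains t where "t < n" "g = edge t"
  using assms unfolding edges_def by blast

lemma finite_edges: "finite edges"
  unfolding edges_def by simp

lemma card_edges: "card edges = n"
  unfolding edges_def by (subst card_image) (auto intro: inj_onI edge_inj)

lemma edges_eq: "{{vs ! t, vs ! ((t + 1) mod n)} | t. t < n} = edges"
  unfolding edges_def edge_def by auto

lemma nbrs_edge_iff:
  "s < n \<Longrightarrow> g \<in> nbrs edges (edge s) \<longleftrightarrow> (\<exists>p<n. g = edge p \<and> p \<noteq> s \<and> edge p \<inter> edge s \<noteq> {})"
  unfolding nbrs_def edges_def using edge_inj by auto

lemma edge_succ_in_nbrs: "t < n \<Longrightarrow> edge ((t + 1) mod n) \<in> nbrs edges (edge t)"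
  unfolding nbrs_def using edge_in_edges succ_less edge_succ_neq edge_succ_meets by blast

lemma nbrs_edge_cases:
  assumes "s < n" "p < n" "p \<noteq> s" "edge p \<inter> edge s \<noteq> {}"
  shows "p = (s + 1) mod n \<or> p = prev s"
  using edges_meet_imp_adjacent[OF assms(1,2)] assms(3,4) succ_eq_iff_prev[OF assms(1,2)]
  by (metis inf_commute)

lemma ex1_other_nbr:
  assumes s: "s < n" and t: "t < n" and "s \<noteq> t" and "edge s \<inter> edge t \<noteq> {}"
  shows "\<exists>!g. g \<in> nbrs edges (edge s) \<and> g \<noteq> edge t"
proof -
  have "edge t \<inter> edge s \<noteq> {}" using assms(4) by blast
  then have t_cases: "t = (s + 1) mod n \<or> t = prev s"
    using nbrs_edge_cases[OF s t] assms(3) by blast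
  define w where "w = (if t = prev s then (s + 1) mod n else prev s)"
  have "(prev s + 1) mod n = s"
    using succ_eq_iff_prev[OF s prev_less[OF s]] by simp
  then have prev_meets: "edge (prev s) \<inter> edge s \<noteq> {}"
    using edge_succ_meets[of "prev s"] by simp
  have succ_meets: "edge ((s + 1) mod n) \<inter> edge s \<noteq> {}"
    using edge_succ_meets[of s] by blast
  have "w < n \<and> w \<noteq> s \<and> w \<noteq> t \<and> edge w \<inter> edge s \<noteq> {}"
  proof (cases "t = prev s")
    case True
    then have "w = (s + 1) mod n" by (simp add: w_def)
    with True show ?thesis
      using succ_less succ_neq[OF s] prev_neq(2)[OF s] succ_meets by auto
  next
    case False
    with t_cases have "w = prev s" "t = (s + 1) mod n" by (simp_all add: w_def)
    then show ?thesis
      using prev_less[OF s] prev_neq[OF s] prev_meets by auto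
  qed
  then have w: "w < n" "w \<noteq> s" "w \<noteq> t" "edge w \<inter> edge s \<noteq> {}" by blast+
  show ?thesis
  proof (rule ex1I[of _ "edge w"])
    show "edge w \<in> nbrs edges (edge s) \<and> edge w \<noteq> edge t"
      using nbrs_edge_iff[OF s] w edge_inj[OF w(1) t] by blast
  next
    fix g assume g: "g \<in> nbrs edges (edge s) \<and> g \<noteq> edge t"
    then have "g \<in> nbrs edges (edge s)" by blast
    then obtain p where p: "p < n" "g = edge p" "p \<noteq> s" "edge p \<inter> edge s \<noteq> {}"
      unfolding nbrs_edge_iff[OF s] by blast
    with g have "p \<noteq> t" by blast
    then have "p = w" using nbrs_edge_cases[OF s p(1) p(3) p(4)] t_cases unfolding w_def by argo
    with p show "g = edge w" by simp
  qed
qed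

lemma bichrom_two_values:
  assumes "bichrom \<Phi> edges" "x \<in> \<Phi> ` edges" "y \<in> \<Phi> ` edges" "z \<in> \<Phi> ` edges"
    and "x \<noteq> y" "y \<noteq> z"
  shows "x = z"
proof (rule ccontr)
  assume "x \<noteq> z"
  with assms(5,6) have "card {x, y, z} = 3" by auto
  moreover have "card {x, y, z} \<le> card (\<Phi> ` edges)"
    using assms(2-4) finite_edges by (intro card_mono) auto
  ultimately show False using assms(1) unfolding bichrom_def by auto
qed

context
  fixes es :: "'a set list" and \<Phi> :: "'a colouring"
  assumes proper: "proper_colouring es \<Phi>" and edges_sub: "edges \<subseteq> set es"
    and bichrom: "bichrom \<Phi> edges"
begin

lemma bichrom_succ_neq: "t < n \<Longrightarrow> \<Phi> (edge t) \<noteq> \<Phi> (edge ((t + 1) mod n))"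
  using proper_colouringD[OF proper _ _ edge_succ_neq edge_succ_meets] edges_sub
    edge_in_edges succ_less bichrom unfolding bichrom_def by blast

lemma bichrom_alternates: "t < n \<Longrightarrow> \<Phi> (edge ((t + 2) mod n)) = \<Phi> (edge t)"
proof -
  assume t: "t < n"
  have "((t + 1) mod n + 1) mod n = (t + 2) mod n" by (simp add: mod_Suc_eq)
  moreover have "\<Phi> (edge t) = \<Phi> (edge (((t + 1) mod n + 1) mod n))"
    by (rule bichrom_two_values[OF bichrom, of _ "\<Phi> (edge ((t + 1) mod n))"])
      (use t edge_in_edges succ_less bichrom_succ_neq in auto)
  ultimately show ?thesis by simp
qed

text \<open>Colours alternate along the cycle, so on an odd cycle the last and the first edge
  would get the same colour.\<close>

lemma bichrom_even: "even n"
proof (rule ccontr)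
  assume "odd n"
  then obtain d where d: "n = 2 * d + 1" by (metis oddE)
  have every_other: "\<Phi> (edge ((2 * m) mod n)) = \<Phi> (edge 0)" for m
  proof (induction m)
    case (Suc m)
    have "(2 * Suc m) mod n = ((2 * m) mod n + 2) mod n"
      using mod_add_left_eq[of "2 * m" n 2] by simp
    with Suc show ?case
      using bichrom_alternates[of "(2 * m) mod n"] three_le by simp
  qed simp
  have "\<Phi> (edge (n - 1)) = \<Phi> (edge 0)"
    using every_other[of d] d by simp
  moreover have "((n - 1) + 1) mod n = 0" using three_le by simp
  ultimately show False using bichrom_succ_neq[of "n - 1"] three_le by simp
qed

end

lemma bichrom_eq_on_edges:
  assumes proper: "proper_colouring es \<Phi>" "proper_colouring es \<Psi>" and sub: "edges \<subseteq> set es"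
    and bichrom: "bichrom \<Phi> edges" "bichrom \<Psi> edges"
    and g: "g0 \<in> edges" "g1 \<in> edges" "g0 \<noteq> g1" "g0 \<inter> g1 \<noteq> {}"
    and agree: "\<Phi> g0 = \<Psi> g0" "\<Phi> g1 = \<Psi> g1"
  shows "\<forall>g\<in>edges. \<Phi> g = \<Psi> g"
proof -
  have "\<Phi> g0 \<noteq> None" using bichrom(1) g(1) unfolding bichrom_def by blast
  then have g01: "\<Phi> g0 \<noteq> \<Phi> g1"
    using proper_colouringD[OF proper(1), of g0 g1] g sub by blast
  have palette: "\<Theta> h = \<Phi> g0 \<or> \<Theta> h = \<Phi> g1"
    if "bichrom \<Theta> edges" "\<Theta> g0 = \<Phi> g0" "\<Theta> g1 = \<Phi> g1" "h \<in> edges" for \<Theta> h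
    using bichrom_two_values[OF that(1) imageI[OF that(4)] imageI[OF g(1)] imageI[OF g(2)]]
      that(2,3) g01 by metis
  obtain s where s: "s < n" "g0 = edge s" using g(1) by (rule edgesE)
  have walk: "\<Phi> (edge ((s + d) mod n)) = \<Psi> (edge ((s + d) mod n))" for d
  proof (induction d)
    case (Suc d)
    let ?t = "(s + d) mod n"
    have t: "?t < n" using three_le by simp
    have "(?t + 1) mod n = (s + Suc d) mod n" by (simp add: mod_Suc_eq)
    moreover have "edge ((s + Suc d) mod n) \<in> edges" using edge_in_edges three_le by simp
    ultimately show ?case
      using bichrom_succ_neq[OF proper(1) sub bichrom(1) t] bichrom_succ_neq[OF proper(2) sub bichrom(2) t]
        palette[OF bichrom(1)] palette[OF bichrom(2)] agree edge_in_edges[OF t] Suc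
      by metis
  qed (use s agree in simp)
  show ?thesis
  proof
    fix g assume "g \<in> edges"
    then obtain t where t: "t < n" "g = edge t" by (rule edgesE)
    then have "(s + (t + n - s)) mod n = t" using s by simp
    then show "\<Phi> g = \<Psi> g" using walk[of "t + n - s"] t by simp
  qed
qed

text \<open>A bichromatic 4-cycle through the new edge e would contain the edge opposite to e, coloured
  like e, whose two connecting edges share a colour; this is exactly case (2) of the forbidden colours.\<close>

lemma bichrom_four_cycle_forbidden:
  fixes \<Phi> :: "'a colouring"
  assumes n4: "n = 4" and proper: "proper_colouring es (\<Phi>(e := Some c))"
    and sub: "edges \<subseteq> set es" and bichrom: "bichrom (\<Phi>(e := Some c)) edges"
    and e: "e \<in> edges" and uncoloured: "\<Phi> e = None"
  shows "c \<in> forbidden es \<Phi> e"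
proof -
  let ?\<Phi> = "\<Phi>(e := Some c)"
  obtain t where t: "t < n" "e = edge t" using e by (rule edgesE)
  define t1 t2 t3 where "t1 = (t + 1) mod n" and "t2 = (t + 2) mod n" and "t3 = (t + 3) mod n"
  have lt: "t1 < n" "t2 < n" "t3 < n" using three_le by (auto simp: t1_def t2_def t3_def)
  have "t < 4" using t n4 by simp
  then have ne: "t1 \<noteq> t" "t2 \<noteq> t" "t3 \<noteq> t"
    and succ: "(t1 + 2) mod n = t3" "(t1 + 1) mod n = t2" "(t2 + 1) mod n = t3" "(t3 + 1) mod n = t"
    unfolding t1_def t2_def t3_def n4 by presburger+
  have not_e: "edge t1 \<noteq> e" "edge t2 \<noteq> e" "edge t3 \<noteq> e"
    using edge_inj lt t ne by metis+
  have in_es: "edge t1 \<in> set es" "edge t2 \<in> set es" "edge t3 \<in> set es"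
    using sub edge_in_edges lt by auto
  have "?\<Phi> (edge t2) = ?\<Phi> (edge t)"
    using bichrom_alternates[OF proper sub bichrom t(1)] by (simp add: t2_def)
  with not_e t have opposite: "\<Phi> (edge t2) = Some c" by simp
  have "?\<Phi> (edge t3) = ?\<Phi> (edge t1)"
    using bichrom_alternates[OF proper sub bichrom lt(1)] unfolding succ(1) .
  with not_e have sides: "\<Phi> (edge t1) = \<Phi> (edge t3)" by simp
  have "?\<Phi> (edge t1) \<noteq> None" using bichrom edge_in_edges lt unfolding bichrom_def by auto
  with not_e have coloured: "\<Phi> (edge t1) \<noteq> None" by simp
  have shapes: "e = {vs ! t1, vs ! t}" "edge t2 = {vs ! t2, vs ! t3}"
    "edge t1 = {vs ! t1, vs ! t2}" "edge t3 = {vs ! t, vs ! t3}"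
    using t succ by (auto simp: edge_def t1_def)
  show ?thesis
    unfolding forbidden_def
    using in_es not_e opposite coloured sides
    by (intro CollectI bexI[OF _ in_es(2)] conjI disjI2 exI[of _ "vs ! t1"] exI[of _ "vs ! t"]
        exI[of _ "vs ! t2"] exI[of _ "vs ! t3"]) (simp_all add: shapes[symmetric])
qed

end

lemma is_cycle_lenE:
  assumes "is_cycle_len es n C"
  obtains vs where "cycle_list vs n" "C = cycle_list.edges vs n" "C \<subseteq> set es"
proof -
  obtain vs where vs: "3 \<le> n" "C \<subseteq> set es" "length vs = n" "distinct vs"
      "C = {{vs ! t, vs ! ((t + 1) mod n)} | t. t < n}"
    using assms unfolding is_cycle_len_def by blast
  interpret cycle_list vs n using vs by unfold_locales auto
  show thesis using that[OF cycle_list_axioms] vs(2,5) edges_eq by simp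
qed

lemma bichrom_cycle_eq_if_adjacent_eq:
  assumes "is_cycle_len es n C" "proper_colouring es \<Phi>" "proper_colouring es \<Psi>"
    and "bichrom \<Phi> C" "bichrom \<Psi> C"
    and "g0 \<in> C" "g1 \<in> C" "g0 \<noteq> g1" "g0 \<inter> g1 \<noteq> {}" "\<Phi> g0 = \<Psi> g0" "\<Phi> g1 = \<Psi> g1"
  shows "\<forall>g\<in>C. \<Phi> g = \<Psi> g"
proof -
  obtain vs where "cycle_list vs n" "C = cycle_list.edges vs n" "C \<subseteq> set es"
    using assms(1) by (rule is_cycle_lenE)
  then show ?thesis using cycle_list.bichrom_eq_on_edges assms(2-) by metis
qed

section \<open>Counting forbidden colours\<close>

lemma finite_vertices: "\<forall>e\<in>set es. card e = 2 \<Longrightarrow> finite (\<Union> (set es))"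
  by (metis List.finite_set card.infinite finite_Union zero_neq_numeral)

lemma degree_le_maxdeg: "\<forall>e\<in>set es. card e = 2 \<Longrightarrow> w \<in> \<Union> (set es) \<Longrightarrow> degree es w \<le> maxdeg es"
  unfolding maxdeg_def using finite_vertices by (intro Max_ge) auto

definition colours_at :: "'a set list \<Rightarrow> 'a colouring \<Rightarrow> 'a set \<Rightarrow> 'a \<Rightarrow> nat set" where
  "colours_at es \<Phi> e w = {c. \<exists>f\<in>set es. f \<noteq> e \<and> w \<in> f \<and> \<Phi> f = Some c}"

lemma finite_colours_at: "finite (colours_at es \<Phi> e w)"
proof (rule finite_subset)
  show "colours_at es \<Phi> e w \<subseteq> (\<lambda>f. the (\<Phi> f)) ` set es" unfolding colours_at_def by force
qed simp

lemma card_colours_at_le: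
  assumes "\<forall>e\<in>set es. card e = 2" "e \<in> set es" "w \<in> e"
  shows "card (colours_at es \<Phi> e w) \<le> maxdeg es - 1"
proof -
  let ?S = "{f \<in> set es. w \<in> f} - {e}"
  have "colours_at es \<Phi> e w \<subseteq> (\<lambda>f. the (\<Phi> f)) ` ?S"
    unfolding colours_at_def by force
  then have "card (colours_at es \<Phi> e w) \<le> card ((\<lambda>f. the (\<Phi> f)) ` ?S)"
    by (rule card_mono[rotated]) simp
  also have "\<dots> \<le> card ?S" by (rule card_image_le) simp
  also have "\<dots> = degree es w - 1" unfolding degree_def using assms(2,3) by simp
  also have "\<dots> \<le> maxdeg es - 1"
    using degree_le_maxdeg[OF assms(1), of w] assms(2,3) by (meson UnionI diff_le_mono)
  finally show ?thesis .
qed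

lemma forbiddenE:
  assumes "c \<in> forbidden es \<Phi> e"
  obtains (adjacent) f where "f \<in> set es" "f \<noteq> e" "\<Phi> f = Some c" "f \<inter> e \<noteq> {}"
  | (opposite) f u v x y where "f \<in> set es" "f \<noteq> e" "\<Phi> f = Some c" "e = {u, v}" "f = {x, y}"
      "{u, x} \<in> set es" "{v, y} \<in> set es" "\<Phi> {u, x} \<noteq> None" "\<Phi> {u, x} = \<Phi> {v, y}"
proof -
  from assms obtain f where f: "f \<in> set es" "f \<noteq> e" "\<Phi> f = Some c"
    and cases: "f \<inter> e \<noteq> {} \<or> (\<exists>u v x y. e = {u, v} \<and> f = {x, y} \<and> {u, x} \<in> set es \<and> {v, y} \<in> set es \<and>
       \<Phi> {u, x} \<noteq> None \<and> \<Phi> {u, x} = \<Phi> {v, y})"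
    unfolding forbidden_def mem_Collect_eq by (elim bexE conjE) (intro that)
  from cases show thesis
  proof
    assume "f \<inter> e \<noteq> {}"
    with f show thesis by (rule adjacent)
  next
    assume "\<exists>u v x y. e = {u, v} \<and> f = {x, y} \<and> {u, x} \<in> set es \<and> {v, y} \<in> set es \<and>
       \<Phi> {u, x} \<noteq> None \<and> \<Phi> {u, x} = \<Phi> {v, y}"
    then show thesis by (elim exE conjE) (rule opposite[OF f]; assumption)
  qed
qed

lemma finite_forbidden: "finite (forbidden es \<Phi> e)"
proof (rule finite_subset)
  show "forbidden es \<Phi> e \<subseteq> (\<lambda>f. the (\<Phi> f)) ` set es"
  proof
    fix c assume "c \<in> forbidden es \<Phi> e"
    then obtain f where "f \<in> set es" "\<Phi> f = Some c" by (cases rule: forbiddenE)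
    then show "c \<in> (\<lambda>f. the (\<Phi> f)) ` set es" by force
  qed
qed simp

lemma forbidden_opposite:
  assumes e: "e = {u, v}" "u \<noteq> v" and "c \<in> forbidden es \<Phi> e"
    and not_at: "c \<notin> colours_at es \<Phi> e u \<union> colours_at es \<Phi> e v"
  obtains f pe qe a where "f \<in> set es" "\<Phi> f = Some c" "pe \<in> set es" "qe \<in> set es" "u \<in> pe" "v \<in> qe"
    "\<Phi> pe = Some a" "\<Phi> qe = Some a" "f = (pe - {u}) \<union> (qe - {v})"
  using assms(3)
proof (cases rule: forbiddenE)
  case (adjacent f)
  then have "u \<in> f \<or> v \<in> f" using e(1) by blast
  with adjacent(1-3) not_at show thesis unfolding colours_at_def by blast
next
  case (opposite f u' v' x y)
  then obtain a where a: "\<Phi> {u', x} = Some a" "\<Phi> {v', y} = Some a" by auto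
  have "z \<notin> e" if "z \<in> f" for z
  proof
    assume "z \<in> e"
    with e(1) that have "u \<in> f \<or> v \<in> f" by auto
    with opposite(1-3) not_at show False unfolding colours_at_def by blast
  qed
  then have xy: "x \<noteq> u" "x \<noteq> v" "y \<noteq> u" "y \<noteq> v" using e(1) opposite(5) by auto
  consider "u' = u" "v' = v" | "u' = v" "v' = u"
    using opposite(4) e by (auto simp: doubleton_eq_iff)
  then show thesis
  proof cases
    case 1
    have "f = ({u, x} - {u}) \<union> ({v, y} - {v})" using xy opposite(5) by auto
    from that[of f "{u, x}" "{v, y}" a, OF opposite(1,3) _ _ _ _ _ _ this]
    show thesis using 1 opposite(6,7) a by simp
  next
    case 2
    have "f = ({u, y} - {u}) \<union> ({v, x} - {v})" using xy opposite(5) by auto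
    from that[of f "{u, y}" "{v, x}" a, OF opposite(1,3) _ _ _ _ _ _ this]
    show thesis using 2 opposite(6,7) a by simp
  qed
qed

text \<open>Colours forbidden only through condition (2) inject into the colours seen at both \<open>u\<close> and
  \<open>v\<close>: such a colour \<open>a\<close> determines the edges \<open>ux\<close>, \<open>vy\<close> (properness) and hence \<open>xy\<close>.\<close>

lemma card_forbidden_le:
  assumes two: "\<forall>e\<in>set es. card e = 2" and proper: "proper_colouring es \<Phi>"
    and e: "e \<in> set es" and uncoloured: "\<Phi> e = None"
  shows "card (forbidden es \<Phi> e) \<le> 2 * (maxdeg es - 1)"
proof -
  obtain u v where uv: "e = {u, v}" "u \<noteq> v" using two e by (meson card_2_iff)
  let ?A = "colours_at es \<Phi> e"
  let ?D = "forbidden es \<Phi> e - (?A u \<union> ?A v)"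
  define r where "r c a \<longleftrightarrow> (\<exists>pe qe. pe \<in> set es \<and> qe \<in> set es \<and> u \<in> pe \<and> v \<in> qe \<and>
      \<Phi> pe = Some a \<and> \<Phi> qe = Some a \<and> \<Phi> ((pe - {u}) \<union> (qe - {v})) = Some c)" for c a
  have "card ?D \<le> card (?A u \<inter> ?A v)"
  proof (rule card_le_if_inj_on_rel[where r = r])
    show "finite (?A u \<inter> ?A v)" by (simp add: finite_colours_at)
  next
    fix c assume "c \<in> ?D"
    then have "c \<in> forbidden es \<Phi> e" "c \<notin> ?A u \<union> ?A v" by simp_all
    then obtain f pe qe a where w: "f \<in> set es" "\<Phi> f = Some c" "pe \<in> set es" "qe \<in> set es"
        "u \<in> pe" "v \<in> qe" "\<Phi> pe = Some a" "\<Phi> qe = Some a" "f = (pe - {u}) \<union> (qe - {v})"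
      by (rule forbidden_opposite[OF uv])
    then have "pe \<noteq> e" "qe \<noteq> e" using uncoloured by auto
    with w have "a \<in> ?A u \<inter> ?A v" unfolding colours_at_def by blast
    moreover have "r c a" unfolding r_def using w by blast
    ultimately show "\<exists>a. a \<in> ?A u \<inter> ?A v \<and> r c a" by blast
  next
    fix c1 c2 a assume "r c1 a" "r c2 a"
    then obtain p1 q1 p2 q2 where "p1 \<in> set es" "q1 \<in> set es" "u \<in> p1" "v \<in> q1"
        "\<Phi> p1 = Some a" "\<Phi> q1 = Some a" "\<Phi> ((p1 - {u}) \<union> (q1 - {v})) = Some c1"
        "p2 \<in> set es" "q2 \<in> set es" "u \<in> p2" "v \<in> q2"
        "\<Phi> p2 = Some a" "\<Phi> q2 = Some a" "\<Phi> ((p2 - {u}) \<union> (q2 - {v})) = Some c2"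
      unfolding r_def by blast
    moreover from this have "p1 = p2" "q1 = q2"
      using proper_colouring_unique_at[OF proper] by metis+
    ultimately show "c1 = c2" by simp
  qed
  have "card (forbidden es \<Phi> e) \<le> card (?A u \<union> ?A v \<union> ?D)"
    by (rule card_mono) (auto simp: finite_colours_at finite_forbidden)
  also have "\<dots> \<le> card (?A u \<union> ?A v) + card ?D" by (rule card_Un_le)
  also have "\<dots> \<le> card (?A u) + card (?A v)"
    using \<open>card ?D \<le> _\<close> card_Un_Int[OF finite_colours_at finite_colours_at, of es \<Phi> e u es \<Phi> e v]
    by simp
  also have "\<dots> \<le> 2 * (maxdeg es - 1)"
    using card_colours_at_le[OF two e, of u \<Phi>] card_colours_at_le[OF two e, of v \<Phi>] uv(1)
    by simp
  finally show ?thesis .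
qed

section \<open>One step of the Procedure\<close>

definition first_uncoloured :: "'a set list \<Rightarrow> 'a colouring \<Rightarrow> 'a set" where
  "first_uncoloured es \<Phi> = es ! Min {t. t < length es \<and> \<Phi> (es ! t) = None}"

definition chosen_colour :: "nat \<Rightarrow> 'a set list \<Rightarrow> 'a colouring \<Rightarrow> nat \<Rightarrow> nat" where
  "chosen_colour K es \<Phi> F = sorted_list_of_set (avail K es \<Phi> (first_uncoloured es \<Phi>)) ! (F - 1)"

definition bichrom_cycles :: "'a set list \<Rightarrow> 'a colouring \<Rightarrow> 'a set \<Rightarrow> 'a set set set" where
  "bichrom_cycles es \<Phi> e = {C. (\<exists>n. is_cycle_len es n C) \<and> e \<in> C \<and> bichrom \<Phi> C}"

definition second_edge :: "'a set list \<Rightarrow> 'a set set \<Rightarrow> 'a set \<Rightarrow> 'a set" where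
  "second_edge es C e = es ! Min {t. t < length es \<and> es ! t \<in> nbrs C e}"

definition third_edge :: "'a set list \<Rightarrow> 'a set set \<Rightarrow> 'a set \<Rightarrow> 'a set" where
  "third_edge es C e = (THE g. g \<in> nbrs C (second_edge es C e) \<and> g \<noteq> e)"

definition uncolour :: "'a set set \<Rightarrow> 'a colouring \<Rightarrow> 'a colouring" where
  "uncolour U \<Phi> = (\<lambda>f. if f \<in> U then None else \<Phi> f)"

lemma uncolour_empty [simp]: "uncolour {} \<Phi> = \<Phi>"
  by (simp add: uncolour_def)

lemma uncolour_eq_None_iff: "uncolour U \<Phi> f = None \<longleftrightarrow> f \<in> U \<or> \<Phi> f = None"
  by (simp add: uncolour_def)

lemma proc_step_eq:
  "proc_step es K idx rule \<Phi> F =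
    (let e = first_uncoloured es \<Phi>; \<Phi>' = \<Phi>(e := Some (chosen_colour K es \<Phi> F));
         B = bichrom_cycles es \<Phi>' e
     in if B = {} then (None, \<Phi>')
        else let C = rule \<Phi>' B; k = card C div 2
             in (Some (k, idx e k C), uncolour (C - {second_edge es C e, third_edge es C e}) \<Phi>'))"
  unfolding proc_step_def first_uncoloured_def chosen_colour_def bichrom_cycles_def
    second_edge_def third_edge_def uncolour_def Let_def
  by simp

lemma first_uncoloured:
  assumes "\<exists>t<length es. \<Phi> (es ! t) = None"
  shows "first_uncoloured es \<Phi> \<in> set es" "\<Phi> (first_uncoloured es \<Phi>) = None"
proof -
  let ?S = "{t. t < length es \<and> \<Phi> (es ! t) = None}"
  have "Min ?S \<in> ?S" using assms by (intro Min_in) auto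
  then show "first_uncoloured es \<Phi> \<in> set es" "\<Phi> (first_uncoloured es \<Phi>) = None"
    unfolding first_uncoloured_def by auto
qed

lemma first_uncoloured_cong:
  "\<forall>f. \<Phi> f = None \<longleftrightarrow> \<Psi> f = None \<Longrightarrow> first_uncoloured es \<Phi> = first_uncoloured es \<Psi>"
  unfolding first_uncoloured_def by simp

lemma second_third_edge:
  assumes "is_cycle_len es n C" "e \<in> C"
  shows "second_edge es C e \<in> C" "third_edge es C e \<in> C"
    "second_edge es C e \<noteq> third_edge es C e" "second_edge es C e \<inter> third_edge es C e \<noteq> {}"
proof -
  obtain vs where cyc: "cycle_list vs n" and C: "C = cycle_list.edges vs n" and sub: "C \<subseteq> set es"
    using assms(1) by (rule is_cycle_lenE)
  interpret cycle_list vs n by (rule cyc)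
  from assms(2) C have "e \<in> edges" by simp
  then obtain t where t: "t < n" "e = edge t" by (rule edgesE)
  let ?S = "{t. t < length es \<and> es ! t \<in> nbrs C e}"
  have nbr: "edge ((t + 1) mod n) \<in> nbrs C e" using edge_succ_in_nbrs[OF t(1)] C t(2) by simp
  then have "edge ((t + 1) mod n) \<in> set es" using sub unfolding nbrs_def by blast
  then obtain q where "q < length es" "es ! q = edge ((t + 1) mod n)" by (auto simp: in_set_conv_nth)
  with nbr have "q \<in> ?S" by simp
  then have "Min ?S \<in> ?S" by (intro Min_in) auto
  then have "second_edge es C e \<in> nbrs edges (edge t)" unfolding second_edge_def C t(2) by simp
  then obtain s where s: "s < n" "second_edge es C e = edge s" "s \<noteq> t" "edge s \<inter> edge t \<noteq> {}"
    unfolding nbrs_edge_iff[OF t(1)] by blast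
  have "third_edge es C e = (THE g. g \<in> nbrs edges (edge s) \<and> g \<noteq> edge t)"
    unfolding third_edge_def s(2) unfolding C t(2) ..
  then have "third_edge es C e \<in> nbrs edges (edge s)"
    using theI'[OF ex1_other_nbr[OF s(1) t(1) s(3) s(4)]] by simp
  then have "third_edge es C e \<in> edges" "third_edge es C e \<noteq> edge s"
    "third_edge es C e \<inter> edge s \<noteq> {}"
    unfolding nbrs_def by simp_all
  with s(1,2) C edge_in_edges show "second_edge es C e \<in> C" "third_edge es C e \<in> C"
    "second_edge es C e \<noteq> third_edge es C e" "second_edge es C e \<inter> third_edge es C e \<noteq> {}"
    by (simp_all add: Int_commute)
qed

lemma uncolour_cycle_inj:
  assumes "is_cycle_len es n C" "e \<in> C"
    and "proper_colouring es \<Phi>" "proper_colouring es \<Psi>" "bichrom \<Phi> C" "bichrom \<Psi> C"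
    and eq: "uncolour (C - {second_edge es C e, third_edge es C e}) \<Phi> =
             uncolour (C - {second_edge es C e, third_edge es C e}) \<Psi>"
  shows "\<Phi> = \<Psi>"
proof
  fix f
  let ?U = "C - {second_edge es C e, third_edge es C e}"
  have outside: "\<Phi> g = \<Psi> g" if "g \<notin> ?U" for g
    using fun_cong[OF eq, of g] unfolding uncolour_def if_not_P[OF that] .
  have "\<forall>g\<in>C. \<Phi> g = \<Psi> g"
    using bichrom_cycle_eq_if_adjacent_eq[OF assms(1,3-6)] second_third_edge[OF assms(1,2)]
      outside by blast
  with outside show "\<Phi> f = \<Psi> f" by blast
qed

lemma proper_colouring_update:
  assumes "proper_colouring es \<Phi>" "c \<notin> forbidden es \<Phi> e"
  shows "proper_colouring es (\<Phi>(e := Some c))"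
  using assms unfolding proper_colouring_def forbidden_def by (auto simp: Int_commute)

lemma proper_colouring_uncolour:
  "proper_colouring es \<Phi> \<Longrightarrow> proper_colouring es (uncolour U \<Phi>)"
  unfolding proper_colouring_def uncolour_def by auto

lemma new_bichrom_cycle:
  assumes proper: "proper_colouring es (\<Phi>(e := Some c))" and uncoloured: "\<Phi> e = None"
    and legal: "c \<notin> forbidden es \<Phi> e" and C: "C \<in> bichrom_cycles es (\<Phi>(e := Some c)) e"
  shows "\<exists>k\<ge>3. card C = 2 * k \<and> C \<in> cycles_through es k e"
proof -
  obtain n where n: "is_cycle_len es n C" and e: "e \<in> C" and b: "bichrom (\<Phi>(e := Some c)) C"
    using C unfolding bichrom_cycles_def by blast
  obtain vs where cyc: "cycle_list vs n" and C_eq: "C = cycle_list.edges vs n" and sub: "C \<subseteq> set es"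
    using n by (rule is_cycle_lenE)
  interpret cycle_list vs n by (rule cyc)
  have "even n" using bichrom_even[OF proper] sub b C_eq by simp
  moreover have "n \<noteq> 4"
    using bichrom_four_cycle_forbidden[OF _ proper _ _ _ uncoloured] sub b e C_eq legal by blast
  ultimately obtain k where "n = 2 * k" "3 \<le> k" using three_le by (elim evenE) auto
  moreover have "card C = n" using card_edges C_eq by simp
  ultimately show ?thesis using n e unfolding cycles_through_def by auto
qed

lemma proc_run_Cons_eq_Some:
  assumes "proc_run es K idx rule \<Phi> (F # Fs) = Some out"
  obtains r rs \<Phi>1 \<Theta> where "\<exists>t<length es. \<Phi> (es ! t) = None"
    "proc_step es K idx rule \<Phi> F = (r, \<Phi>1)" "proc_run es K idx rule \<Phi>1 Fs = Some (rs, \<Theta>)"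
    "out = (r # rs, \<Theta>)"
  using assms by (auto split: if_splits prod.splits)

section \<open>Injectivity\<close>

locale colouring_procedure =
  fixes es :: "'a set list" and K N :: nat
    and idx :: "'a set \<Rightarrow> nat \<Rightarrow> 'a set set \<Rightarrow> nat"
    and rule :: "'a colouring \<Rightarrow> 'a set set set \<Rightarrow> 'a set set"
  assumes two_vertices: "\<forall>e\<in>set es. card e = 2"
    and enough_colours: "2 * (maxdeg es - 1) + N \<le> K"
    and idx_inj: "\<forall>e\<in>set es. \<forall>k\<ge>3. inj_on (idx e k) (cycles_through es k e)"
    and rule_in: "\<forall>\<Phi> B. B \<noteq> {} \<longrightarrow> rule \<Phi> B \<in> B"
begin

lemma N_le_card_avail:
  assumes "proper_colouring es \<Phi>" "e \<in> set es" "\<Phi> e = None"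
  shows "N \<le> card (avail K es \<Phi> e)"
proof -
  have "card {1..K} - card (forbidden es \<Phi> e) \<le> card (avail K es \<Phi> e)"
    unfolding avail_def by (rule diff_card_le_card_Diff[OF finite_forbidden])
  then show ?thesis using card_forbidden_le[OF two_vertices assms] enough_colours by simp
qed

lemma chosen_colour_avail:
  assumes "proper_colouring es \<Phi>" "\<exists>t<length es. \<Phi> (es ! t) = None" "F \<in> {1..N}"
  shows "chosen_colour K es \<Phi> F \<in> avail K es \<Phi> (first_uncoloured es \<Phi>)"
proof -
  let ?A = "avail K es \<Phi> (first_uncoloured es \<Phi>)"
  have "N \<le> card ?A" using N_le_card_avail[OF assms(1) first_uncoloured[OF assms(2)]] .
  with assms(3) have "finite ?A" "F - 1 < card ?A" by (auto intro: card_ge_0_finite)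
  then show ?thesis unfolding chosen_colour_def
    by (metis nth_mem sorted_list_of_set.length_sorted_key_list_of_set
        sorted_list_of_set.set_sorted_key_list_of_set)
qed

lemma chosen_colour_inj:
  assumes "proper_colouring es \<Phi>" "\<exists>t<length es. \<Phi> (es ! t) = None" "F \<in> {1..N}" "G \<in> {1..N}"
    and "chosen_colour K es \<Phi> F = chosen_colour K es \<Phi> G"
  shows "F = G"
proof -
  let ?A = "avail K es \<Phi> (first_uncoloured es \<Phi>)"
  have "N \<le> card ?A" using N_le_card_avail[OF assms(1) first_uncoloured[OF assms(2)]] .
  with assms(3,4) have "F - 1 < length (sorted_list_of_set ?A)" "G - 1 < length (sorted_list_of_set ?A)"
    by auto
  with assms(5) have "F - 1 = G - 1"
    unfolding chosen_colour_def by (simp add: nth_eq_iff_index_eq)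
  with assms(3,4) show ?thesis by auto
qed

lemma proper_colouring_chosen:
  assumes "proper_colouring es \<Phi>" "\<exists>t<length es. \<Phi> (es ! t) = None" "F \<in> {1..N}"
  shows "proper_colouring es (\<Phi>(first_uncoloured es \<Phi> := Some (chosen_colour K es \<Phi> F)))"
  using proper_colouring_update[OF assms(1)] chosen_colour_avail[OF assms] unfolding avail_def
  by blast

lemma proc_step_cases:
  assumes proper: "proper_colouring es \<Phi>" and incomplete: "\<exists>t<length es. \<Phi> (es ! t) = None"
    and F: "F \<in> {1..N}" and e_def: "e = first_uncoloured es \<Phi>"
    and c_def: "c = chosen_colour K es \<Phi> F"
  obtains (plain) "proc_step es K idx rule \<Phi> F = (None, \<Phi>(e := Some c))"
  | (cycle) k C where "3 \<le> k" "C \<in> cycles_through es k e" "bichrom (\<Phi>(e := Some c)) C"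
      "proc_step es K idx rule \<Phi> F =
         (Some (k, idx e k C), uncolour (C - {second_edge es C e, third_edge es C e}) (\<Phi>(e := Some c)))"
proof -
  have legal: "c \<notin> forbidden es \<Phi> e"
    using chosen_colour_avail[OF proper incomplete F] unfolding avail_def e_def c_def by simp
  have proper': "proper_colouring es (\<Phi>(e := Some c))"
    using proper_colouring_chosen[OF proper incomplete F] unfolding e_def c_def .
  note step = proc_step_eq[of es K idx rule \<Phi> F, folded e_def c_def]
  show thesis
  proof (cases "bichrom_cycles es (\<Phi>(e := Some c)) e = {}")
    case True
    with step show thesis by (intro plain) simp
  next
    case False
    let ?C = "rule (\<Phi>(e := Some c)) (bichrom_cycles es (\<Phi>(e := Some c)) e)"
    have C: "?C \<in> bichrom_cycles es (\<Phi>(e := Some c)) e" using rule_in False by blast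
    then obtain k where "3 \<le> k" "card ?C = 2 * k" "?C \<in> cycles_through es k e"
      using new_bichrom_cycle[OF proper' first_uncoloured(2)[OF incomplete, folded e_def] legal]
      by blast
    moreover have "bichrom (\<Phi>(e := Some c)) ?C" using C unfolding bichrom_cycles_def by blast
    ultimately show thesis using step False by (intro cycle[of k ?C]) (simp_all add: Let_def)
  qed
qed

lemma proc_step_proper:
  assumes "proper_colouring es \<Phi>" "\<exists>t<length es. \<Phi> (es ! t) = None" "F \<in> {1..N}"
  shows "proper_colouring es (snd (proc_step es K idx rule \<Phi> F))"
  using assms(1-3) refl refl
proof (cases rule: proc_step_cases)
  case plain
  then show ?thesis using proper_colouring_chosen[OF assms] by simp
next
  case (cycle k C)
  then show ?thesis using proper_colouring_uncolour[OF proper_colouring_chosen[OF assms]] by simp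
qed

lemma update_chosen_colour_inj:
  assumes "proper_colouring es \<Phi>" "\<exists>t<length es. \<Phi> (es ! t) = None" "F \<in> {1..N}" "G \<in> {1..N}"
    and "e = first_uncoloured es \<Phi>" "\<Psi> e = None"
    and eq: "\<Phi>(e := Some (chosen_colour K es \<Phi> F)) = \<Psi>(e := Some (chosen_colour K es \<Psi> G))"
  shows "\<Phi> = \<Psi> \<and> F = G"
proof -
  have "\<Phi> e = None" using first_uncoloured(2)[OF assms(2)] assms(5) by simp
  have "\<Phi> = \<Psi>"
  proof
    fix f show "\<Phi> f = \<Psi> f"
      using fun_cong[OF eq, of f] \<open>\<Phi> e = None\<close> assms(6) by (cases "f = e") auto
  qed
  moreover have "chosen_colour K es \<Phi> F = chosen_colour K es \<Psi> G" using fun_cong[OF eq, of e] by simp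
  ultimately show ?thesis using chosen_colour_inj[OF assms(1-4)] by simp
qed

lemma proc_steps_same_record:
  assumes proper: "proper_colouring es \<Phi>" "proper_colouring es \<Psi>"
    and same: "\<forall>f. \<Phi> f = None \<longleftrightarrow> \<Psi> f = None"
    and incomplete: "\<exists>t<length es. \<Phi> (es ! t) = None" and FG: "F \<in> {1..N}" "G \<in> {1..N}"
    and steps: "proc_step es K idx rule \<Phi> F = (r, \<Phi>1)" "proc_step es K idx rule \<Psi> G = (r, \<Psi>1)"
    and e_def: "e = first_uncoloured es \<Phi>"
    and c_def: "c = chosen_colour K es \<Phi> F" and c'_def: "c' = chosen_colour K es \<Psi> G"
  obtains U where "\<Phi>1 = uncolour U (\<Phi>(e := Some c))" "\<Psi>1 = uncolour U (\<Psi>(e := Some c'))"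
    "\<Phi>1 = \<Psi>1 \<Longrightarrow> \<Phi>(e := Some c) = \<Psi>(e := Some c')"
proof -
  have incomplete': "\<exists>t<length es. \<Psi> (es ! t) = None" using incomplete same by blast
  have e': "e = first_uncoloured es \<Psi>" unfolding e_def by (rule first_uncoloured_cong[OF same])
  have proper': "proper_colouring es (\<Phi>(e := Some c))" "proper_colouring es (\<Psi>(e := Some c'))"
    using proper_colouring_chosen[OF proper(1) incomplete FG(1)]
      proper_colouring_chosen[OF proper(2) incomplete' FG(2)]
    unfolding e_def c_def c'_def e'[symmetric] by simp_all
  show thesis
    using proper(1) incomplete FG(1) e_def c_def
  proof (cases rule: proc_step_cases)
    case plain
    note \<Phi>_step = plain
    show thesis
      using proper(2) incomplete' FG(2) e' c'_def
    proof (cases rule: proc_step_cases)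
      case plain
      with \<Phi>_step steps show thesis by (intro that[of "{}"]) simp_all
    next
      case (cycle k C)
      with \<Phi>_step steps show thesis by simp
    qed
  next
    case (cycle k C)
    note \<Phi>_step = cycle
    show thesis
      using proper(2) incomplete' FG(2) e' c'_def
    proof (cases rule: proc_step_cases)
      case plain
      with \<Phi>_step steps show thesis by simp
    next
      case (cycle k' D)
      with \<Phi>_step steps have "k' = k" "idx e k D = idx e k C" by auto
      then have "D = C"
        using idx_inj first_uncoloured(1)[OF incomplete] e_def \<Phi>_step(1,2) cycle(2)
        by (metis inj_onD)
      have "is_cycle_len es (2 * k) C" "e \<in> C"
        using \<Phi>_step(2) unfolding cycles_through_def by simp_all
      note erased_inj = uncolour_cycle_inj[OF this proper' \<Phi>_step(3) cycle(3)[unfolded \<open>D = C\<close>]]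
      from \<Phi>_step cycle steps \<open>D = C\<close> show thesis
        by (intro that[of "C - {second_edge es C e, third_edge es C e}"] erased_inj) simp_all
    qed
  qed
qed

lemma proc_steps_same_record_inj:
  assumes proper: "proper_colouring es \<Phi>" "proper_colouring es \<Psi>"
    and same: "\<forall>f. \<Phi> f = None \<longleftrightarrow> \<Psi> f = None"
    and incomplete: "\<exists>t<length es. \<Phi> (es ! t) = None" and FG: "F \<in> {1..N}" "G \<in> {1..N}"
    and steps: "proc_step es K idx rule \<Phi> F = (r, \<Phi>1)" "proc_step es K idx rule \<Psi> G = (r, \<Psi>1)"
  shows "(\<forall>f. \<Phi>1 f = None \<longleftrightarrow> \<Psi>1 f = None) \<and> (\<Phi>1 = \<Psi>1 \<longrightarrow> \<Phi> = \<Psi> \<and> F = G)"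
proof -
  define e where "e = first_uncoloured es \<Phi>"
  obtain U where U: "\<Phi>1 = uncolour U (\<Phi>(e := Some (chosen_colour K es \<Phi> F)))"
      "\<Psi>1 = uncolour U (\<Psi>(e := Some (chosen_colour K es \<Psi> G)))"
    and undo: "\<Phi>1 = \<Psi>1 \<Longrightarrow>
      \<Phi>(e := Some (chosen_colour K es \<Phi> F)) = \<Psi>(e := Some (chosen_colour K es \<Psi> G))"
    using proc_steps_same_record[OF assms e_def refl refl] by blast
  have "\<Psi> e = None"
    using first_uncoloured(2)[OF incomplete] same unfolding e_def by blast
  then have "\<Phi>1 = \<Psi>1 \<longrightarrow> \<Phi> = \<Psi> \<and> F = G"
    using update_chosen_colour_inj[OF proper(1) incomplete FG e_def] undo by blast
  moreover have "\<forall>f. \<Phi>1 f = None \<longleftrightarrow> \<Psi>1 f = None"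
    using same unfolding U uncolour_eq_None_iff by simp
  ultimately show ?thesis by blast
qed

lemma proc_run_inj:
  assumes "proper_colouring es \<Phi>" "proper_colouring es \<Psi>" "\<forall>f. \<Phi> f = None \<longleftrightarrow> \<Psi> f = None"
    and "set Fs \<subseteq> {1..N}" "set Gs \<subseteq> {1..N}"
    and "proc_run es K idx rule \<Phi> Fs = Some out" "proc_run es K idx rule \<Psi> Gs = Some out"
  shows "\<Phi> = \<Psi> \<and> Fs = Gs"
  using assms
proof (induction Fs arbitrary: \<Phi> \<Psi> Gs out)
  case Nil
  have "Gs = []"
  proof (rule ccontr)
    assume "Gs \<noteq> []"
    then obtain G Gs' where "Gs = G # Gs'" by (cases Gs) auto
    with Nil.prems(7) have "proc_run es K idx rule \<Psi> (G # Gs') = Some out" by simp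
    then show False by (rule proc_run_Cons_eq_Some) (use Nil.prems(6) in simp)
  qed
  with Nil.prems(6,7) show ?case by auto
next
  case (Cons F Fs)
  from Cons.prems(6) obtain r rs \<Phi>1 \<Theta> where \<Phi>: "\<exists>t<length es. \<Phi> (es ! t) = None"
      "proc_step es K idx rule \<Phi> F = (r, \<Phi>1)" "proc_run es K idx rule \<Phi>1 Fs = Some (rs, \<Theta>)"
    and out: "out = (r # rs, \<Theta>)"
    by (rule proc_run_Cons_eq_Some)
  obtain G Gs' where Gs: "Gs = G # Gs'"
    using Cons.prems(7) out by (cases Gs) auto
  from Cons.prems(7)[unfolded Gs] obtain \<Psi>1 where \<Psi>: "proc_step es K idx rule \<Psi> G = (r, \<Psi>1)"
      "proc_run es K idx rule \<Psi>1 Gs' = Some (rs, \<Theta>)"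
    by (rule proc_run_Cons_eq_Some) (simp add: out)
  have FG: "F \<in> {1..N}" "G \<in> {1..N}" "set Fs \<subseteq> {1..N}" "set Gs' \<subseteq> {1..N}"
    using Cons.prems(4,5) Gs by auto
  have incomplete': "\<exists>t<length es. \<Psi> (es ! t) = None" using \<Phi>(1) Cons.prems(3) by blast
  have proper1: "proper_colouring es \<Phi>1" "proper_colouring es \<Psi>1"
    using proc_step_proper[OF Cons.prems(1) \<Phi>(1) FG(1)] proc_step_proper[OF Cons.prems(2) incomplete' FG(2)]
      \<Phi>(2) \<Psi>(1) by simp_all
  note determines = proc_steps_same_record_inj[OF Cons.prems(1-3) \<Phi>(1) FG(1,2) \<Phi>(2) \<Psi>(1)]
  have "\<Phi>1 = \<Psi>1 \<and> Fs = Gs'"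
    using Cons.IH[OF proper1 _ FG(3,4) \<Phi>(3) \<Psi>(2)] determines by blast
  with determines Gs show ?case by blast
qed

lemma inj_on_proc_run:
  assumes "proper_colouring es \<Phi>"
  shows "inj_on (proc_run es K idx rule \<Phi>) {Fs. set Fs \<subseteq> {1..N} \<and> proc_run es K idx rule \<Phi> Fs \<noteq> None}"
proof (rule inj_onI)
  fix Fs Gs
  assume "Fs \<in> {Fs. set Fs \<subseteq> {1..N} \<and> proc_run es K idx rule \<Phi> Fs \<noteq> None}"
    and "Gs \<in> {Fs. set Fs \<subseteq> {1..N} \<and> proc_run es K idx rule \<Phi> Fs \<noteq> None}"
    and "proc_run es K idx rule \<Phi> Fs = proc_run es K idx rule \<Phi> Gs"
  then show "Fs = Gs" using proc_run_inj[OF assms assms] by force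
qed

end

lemma nat_ceiling_add_mult_ge:
  fixes \<gamma> :: real and \<Delta> :: nat
  assumes "0 \<le> \<gamma>"
  shows "2 * (\<Delta> - 1) + nat \<lceil>\<gamma> * (real \<Delta> - 1)\<rceil> \<le> nat \<lceil>(2 + \<gamma>) * (real \<Delta> - 1)\<rceil>"
proof (cases "\<Delta> = 0")
  case True
  then have "\<lceil>\<gamma> * (real \<Delta> - 1)\<rceil> \<le> 0" using assms by (simp add: ceiling_le_iff)
  with True show ?thesis by simp
next
  case False
  then have m: "real \<Delta> - 1 = real (\<Delta> - 1)" by (simp add: of_nat_diff)
  have "(2 + \<gamma>) * real (\<Delta> - 1) = \<gamma> * real (\<Delta> - 1) + of_int (int (2 * (\<Delta> - 1)))"
    by (simp add: algebra_simps)
  then have "\<lceil>(2 + \<gamma>) * real (\<Delta> - 1)\<rceil> = \<lceil>\<gamma> * real (\<Delta> - 1)\<rceil> + int (2 * (\<Delta> - 1))"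
    by (simp only: ceiling_add_of_int)
  moreover have "0 \<le> \<lceil>\<gamma> * real (\<Delta> - 1)\<rceil>"
    using assms by (simp add: order_less_le_trans[OF _ mult_nonneg_nonneg])
  ultimately show ?thesis unfolding m by (simp add: nat_add_distrib)
qed

theorem lemma2:
  fixes es :: "'a set list" and \<gamma> :: real and \<Delta> K i :: nat
    and idx :: "'a set \<Rightarrow> nat \<Rightarrow> 'a set set \<Rightarrow> nat"
    and rule :: "'a colouring \<Rightarrow> 'a set set set \<Rightarrow> 'a set set"
  assumes "distinct es" and "\<forall>e\<in>set es. card e = 2"
    and "\<Delta> = maxdeg es"
    and "\<gamma> > 1"
    and "K = nat \<lceil>(2 + \<gamma>) * (real \<Delta> - 1)\<rceil>"
    and "\<forall>e\<in>set es. \<forall>k\<ge>3. bij_betw (idx e k) (cycles_through es k e)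
                                 {1..card (cycles_through es k e)}"
    and "\<forall>\<Phi> B. B \<noteq> {} \<longrightarrow> rule \<Phi> B \<in> B"
  shows "inj_on (proc_run es K idx rule (\<lambda>_. None))
           {Fs. length Fs = i \<and> set Fs \<subseteq> {1..nat \<lceil>\<gamma> * (real \<Delta> - 1)\<rceil>}
                \<and> proc_run es K idx rule (\<lambda>_. None) Fs \<noteq> None}"
proof -
  have "\<forall>e\<in>set es. \<forall>k\<ge>3. inj_on (idx e k) (cycles_through es k e)"
    using assms(6) bij_betw_imp_inj_on by blast
  moreover have "2 * (\<Delta> - 1) + nat \<lceil>\<gamma> * (real \<Delta> - 1)\<rceil> \<le> K"
    using nat_ceiling_add_mult_ge[of \<gamma> \<Delta>] assms(4,5) by simp
  ultimately interpret colouring_procedure es K "nat \<lceil>\<gamma> * (real \<Delta> - 1)\<rceil>" idx rule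
    using assms(2,3,7) by unfold_locales simp_all
  have "proper_colouring es (\<lambda>_. None)" by (simp add: proper_colouring_def)
  from inj_on_proc_run[OF this] show ?thesis by (rule inj_on_subset) blast
qed

end
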